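(* Fix $a>0$. As $b\to+\infty$ through real values, uniformly for $\zeta$ in compact subsets of the complex plane, $$ {}_1F_1\big(a;b;b(1+b^{-1/2}\zeta)\big)=\frac{\Gamma(b)}{\Gamma(b-a)}\,b^{-a/2}\,e^{\zeta^2/4}\Big[D_{-a}(-\zeta)+\frac{A_1(a,\zeta)}{b^{1/2}}+\frac{A_2(a,\zeta)}{b}+O(b^{-3/2})\Big], $$ where $$A_1(a,\zeta)=a(a+1)D_{-a-1}(-\zeta)-\frac{a(a+1)(a+2)}{3}D_{-a-3}(-\zeta),$$ $$A_2(a,\zeta)=\frac{a(a+1)^2(a+2)}{2}D_{-a-2}(-\zeta)-\frac{\Gamma(a+4)}{\Gamma(a)}\Big(\frac14+\frac{a+1}{3}\Big)D_{-a-4}(-\zeta)+\frac{\Gamma(a+6)}{18\,\Gamma(a)}D_{-a-6}(-\zeta).$$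
   Context: ${}_1F_1(a;b;z)=\sum_{k=0}^\infty \frac{(a)_k}{(b)_k}\frac{z^k}{k!}$ is Kummer's confluent hypergeometric function, with $(x)_k=\Gamma(x+k)/\Gamma(x)$. $D_\nu$ denotes the parabolic cylinder function, given for $\mathrm{Re}\,\nu<0$ by $D_\nu(z)=\frac{e^{-z^2/4}}{\Gamma(-\nu)}\int_0^\infty e^{-zs-s^2/2}s^{-\nu-1}\,ds$. *)

theory Defs
  imports "HOL-Analysis.Analysis"
begin

definition hyp1F1 :: "real \<Rightarrow> real \<Rightarrow> complex \<Rightarrow> complex" where
  "hyp1F1 a b z = (\<Sum>k. complex_of_real (pochhammer a k / pochhammer b k) * z ^ k / of_nat (fact k))"

text \<open>Parabolic cylinder function D_nu(z) for real nu < 0 via its integral representation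
  D_nu(z) = exp(-z^2/4)/Gamma(-nu) * integral from 0 to infinity of exp(-z s - s^2/2) s^(-nu-1) ds.\<close>
definition pcf_D :: "real \<Rightarrow> complex \<Rightarrow> complex" where
  "pcf_D \<nu> z = exp (- (z^2) / 4) / complex_of_real (Gamma (- \<nu>)) *
     integral {0<..} (\<lambda>s::real. exp (- z * complex_of_real s - complex_of_real (s^2 / 2))
                                  * complex_of_real (s powr (- \<nu> - 1)))"

definition A1 :: "real \<Rightarrow> complex \<Rightarrow> complex" where
  "A1 a \<zeta> = complex_of_real (a * (a + 1)) * pcf_D (- a - 1) (- \<zeta>)
            - complex_of_real (a * (a + 1) * (a + 2) / 3) * pcf_D (- a - 3) (- \<zeta>)"

definition A2 :: "real \<Rightarrow> complex \<Rightarrow> complex" where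
  "A2 a \<zeta> = complex_of_real (a * (a + 1)^2 * (a + 2) / 2) * pcf_D (- a - 2) (- \<zeta>)
            - complex_of_real (Gamma (a + 4) / Gamma a * (1/4 + (a + 1) / 3)) * pcf_D (- a - 4) (- \<zeta>)
            + complex_of_real (Gamma (a + 6) / (18 * Gamma a)) * pcf_D (- a - 6) (- \<zeta>)"

end

(*
  Euler's integral, after the substitution t = s / sqrt b, writes 1F1(a; b; b + sqrt b * zeta) as
  Gamma(b) / (Gamma(a) Gamma(b - a)) * b^(-a/2) times the integral over s > 0 of
  e^(zeta s) s^(a-1) h(s), where h(s) = e^(r s) (1 - s/r)^(r^2 - a - 1) for s < r = sqrt b
  and h(s) = 0 otherwise.  Expanding log h in powers of 1/r gives, uniformly in s > 0,
    h(s) = e^(-s^2/2) (1 + q1(s)/r + q2(s)/r^2) + O((1 + s)^15 e^(-s^2/2) / r^3)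
  with explicit polynomials q1, q2: for s <= r/2 this follows from the Taylor expansions of
  log (1 - x) and exp, and for s > r/2 from the crude bound h(s) <= e^(3(a+1)/2) e^(-s^2/2)
  together with 1 <= 8 s^3 / r^3.  The moments of the Gaussian weight are parabolic cylinder
  functions, int_0^oo e^(zeta s - s^2/2) s^(a+j-1) ds = Gamma(a + j) e^(zeta^2/4) D_(-a-j)(-zeta),
  so the main terms integrate to exactly Gamma(a) e^(zeta^2/4) (D_(-a)(-zeta) + A1/sqrt b + A2/b),
  and the error term to O(e^(M^2/4) b^(-3/2)) relative to the prefactor when |zeta| <= M.
*)

theory Submission
  imports Defs
begin

lemma sum_exp_series_le_exp:
  fixes x :: real
  assumes "x \<ge> 0"
  shows "(\<Sum>k<n. x^k / fact k) \<le> exp x"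
proof -
  have exp_sums: "(\<lambda>k. x^k / fact k) sums exp x"
    using exp_converges[of x] by (simp add: divide_inverse mult.commute)
  have "(\<Sum>k<n. x^k / fact k) \<le> (\<Sum>k. x^k / fact k)"
    by (rule sum_le_suminf) (use exp_sums assms in \<open>auto simp: sums_iff\<close>)
  then show ?thesis
    using exp_sums by (simp add: sums_iff)
qed

lemma power_le_fact_mult_exp:
  fixes x :: real
  assumes "x \<ge> 0"
  shows "x^n \<le> fact n * exp x"
proof -
  have "x^n / fact n \<le> (\<Sum>k<Suc n. x^k / fact k)"
    by (rule member_le_sum) (use assms in auto)
  also have "\<dots> \<le> exp x"
    using assms by (rule sum_exp_series_le_exp)
  finally show ?thesis
    by (simp add: divide_le_eq mult.commute)
qed

lemma has_real_derivative_ln_one_minus_plus_taylor: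
  fixes t :: real
  assumes "t < 1"
  shows "((\<lambda>x. ln (1 - x) + (\<Sum>k=1..n. x^k / k)) has_real_derivative - (t^n / (1 - t))) (at t)"
proof -
  have "(\<Sum>k=1..n. real k * t^(k - 1) / real k) = (\<Sum>k<n. t^k)"
    by (induction n) auto
  also have "\<dots> = (1 - t^n) / (1 - t)"
    using assms by (simp add: sum_gp_strict)
  also have "- 1 / (1 - t) + (1 - t^n) / (1 - t) = - (t^n / (1 - t))"
    by (simp only: add_divide_distrib[symmetric]) simp
  finally have "- 1 / (1 - t) + (\<Sum>k=1..n. real k * t^(k - 1) / real k) = - (t^n / (1 - t))"
    by simp
  moreover have "((\<lambda>x. ln (1 - x) + (\<Sum>k=1..n. x^k / k)) has_real_derivative
      - 1 / (1 - t) + (\<Sum>k=1..n. real k * t^(k - 1) / real k)) (at t)"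
    using assms by (auto intro!: derivative_eq_intros)
  ultimately show ?thesis by simp
qed

lemma ln_one_minus_plus_taylor_nonpos:
  fixes x :: real
  assumes "0 \<le> x" "x < 1"
  shows "ln (1 - x) + (\<Sum>k=1..n. x^k / k) \<le> 0"
proof -
  have "ln (1 - x) + (\<Sum>k=1..n. x^k / k) \<le> ln (1 - 0) + (\<Sum>k=1..n. 0^k / k)"
  proof (rule DERIV_nonpos_imp_nonincreasing[OF assms(1)])
    fix t assume "0 \<le> t" "t \<le> x"
    with assms show "\<exists>y. ((\<lambda>x. ln (1 - x) + (\<Sum>k=1..n. x^k / k)) has_real_derivative y) (at t) \<and> y \<le> 0"
      by (intro exI[of _ "- (t^n / (1 - t))"] conjI has_real_derivative_ln_one_minus_plus_taylor) auto
  qed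
  moreover have "(\<Sum>k=1..n. (0::real)^k / k) = 0"
    by (intro sum.neutral) auto
  ultimately show ?thesis by simp
qed

lemma abs_ln_one_minus_plus_taylor_le:
  fixes x :: real
  assumes "n \<ge> 1" "0 \<le> x" "x \<le> 1/2"
  shows "\<bar>ln (1 - x) + (\<Sum>k=1..n. x^k / k)\<bar> \<le> x^Suc n"
proof -
  define f where "f x = ln (1 - x) + (\<Sum>k=1..n. x^k / k) + x^Suc n" for x :: real
  have "f 0 \<le> f x"
  proof (rule DERIV_nonneg_imp_nondecreasing[OF assms(2)])
    fix t assume t: "0 \<le> t" "t \<le> x"
    have "t^n / (1 - t) \<le> t^n / (1/2)"
      using t assms by (intro divide_left_mono) auto
    also have "\<dots> = 2 * t^n" by simp
    also have "\<dots> \<le> real (Suc n) * t^n"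
      by (rule mult_right_mono) (use t assms(1) in auto)
    finally have "0 \<le> - (t^n / (1 - t)) + real (Suc n) * t^n" by simp
    moreover have "(f has_real_derivative - (t^n / (1 - t)) + real (Suc n) * t^n) (at t)"
      unfolding f_def using t assms
      by (intro DERIV_add has_real_derivative_ln_one_minus_plus_taylor)
        (auto intro!: derivative_eq_intros simp: mult.assoc distrib_right power_Suc2[symmetric])
    ultimately show "\<exists>y. (f has_real_derivative y) (at t) \<and> 0 \<le> y" by blast
  qed
  moreover have "ln (1 - x) + (\<Sum>k=1..n. x^k / k) \<le> 0"
    using assms by (intro ln_one_minus_plus_taylor_nonpos) auto
  moreover have "(\<Sum>k=1..n. (0::real)^k / k) = 0"
    by (intro sum.neutral) auto
  ultimately show ?thesis by (simp add: f_def)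
qed

lemma ln_one_minus_second_order:
  fixes x :: real
  assumes "0 \<le> x" "x \<le> 1/2"
  shows "ln (1 - x) + x + x^2/2 \<le> 0" "\<bar>ln (1 - x) + x + x^2/2\<bar> \<le> x^3"
  using ln_one_minus_plus_taylor_nonpos[of x 2] abs_ln_one_minus_plus_taylor_le[of 2 x] assms
  by (simp_all add: eval_nat_numeral add.assoc)

lemma ln_one_minus_fourth_order:
  fixes x :: real
  assumes "0 \<le> x" "x \<le> 1/2"
  shows "\<bar>ln (1 - x) + x + x^2/2 + x^3/3 + x^4/4\<bar> \<le> x^5"
  using abs_ln_one_minus_plus_taylor_le[of 4 x] assms
  by (simp add: eval_nat_numeral add.assoc)

lemma power_le_one_plus_power:
  fixes s :: real
  assumes "0 \<le> s" "j \<le> k"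
  shows "s^j \<le> (1 + s)^k"
proof -
  have "s^j \<le> (1 + s)^j"
    using assms(1) by (intro power_mono) auto
  also have "\<dots> \<le> (1 + s)^k"
    using assms by (intro power_increasing) auto
  finally show ?thesis .
qed

lemma abs_binomial_le_one_plus_power:
  fixes s A c d :: real
  assumes "0 \<le> s" "\<bar>c\<bar> \<le> A" "\<bar>d\<bar> \<le> A" "i \<le> n" "j \<le> n"
  shows "\<bar>c * s^i + d * s^j\<bar> \<le> 2 * A * (1 + s)^n"
proof -
  have "\<bar>c * s^i\<bar> \<le> A * (1 + s)^n" "\<bar>d * s^j\<bar> \<le> A * (1 + s)^n"
    using assms power_le_one_plus_power[of s i n] power_le_one_plus_power[of s j n]
    by (auto simp: abs_mult intro!: mult_mono)
  then show ?thesis by linarith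
qed

lemma one_plus_power_mult_gauss_le:
  fixes s M :: real
  assumes "s \<ge> 0"
  shows "(1 + s)^n * exp (M * s - s^2/2) \<le> fact n * exp (1 + (M + 2)^2/2) * exp (- s)"
proof -
  have "(1 + s)^n * exp (M * s - s^2/2) \<le> fact n * exp (1 + s) * exp (M * s - s^2/2)"
    using power_le_fact_mult_exp[of "1 + s" n] assms by (intro mult_right_mono) auto
  also have "\<dots> = fact n * exp (1 + (M + 2) * s - s^2/2) * exp (- s)"
    by (simp add: algebra_simps flip: exp_add)
  also have "\<dots> \<le> fact n * exp (1 + (M + 2)^2/2) * exp (- s)"
  proof -
    have "(M + 2) * s - s^2/2 \<le> (M + 2)^2/2"
      using zero_le_power2[of "M + 2 - s"] by (simp add: power2_eq_square algebra_simps)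
    then show ?thesis by (intro mult_right_mono mult_left_mono) auto
  qed
  finally show ?thesis .
qed

lemma abs_exp_minus_taylor2_le:
  fixes w L :: real
  assumes "w \<le> L" "L \<ge> 0"
  shows "\<bar>exp w - 1 - w - w^2/2\<bar> \<le> (exp L + 3) * \<bar>w\<bar>^3"
proof (cases "\<bar>w\<bar> \<le> 1")
  case True
  obtain t where t: "\<bar>t\<bar> \<le> \<bar>w\<bar>" "exp w = (\<Sum>m<3. w^m / fact m) + exp t / fact 3 * w^3"
    using Maclaurin_exp_le[of w 3] by blast
  have "exp t \<le> exp 1"
    using t(1) True by simp
  also have "exp (1::real) \<le> 3"
    using exp_le by simp
  finally have "exp t / 6 \<le> exp L + 3"
    using exp_gt_zero[of L] by linarith
  have remainder: "exp w - 1 - w - w^2/2 = exp t / 6 * w^3"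
    using t(2) by (simp add: eval_nat_numeral fact_numeral power2_eq_square)
  have "\<bar>exp w - 1 - w - w^2/2\<bar> = exp t / 6 * \<bar>w\<bar>^3"
    unfolding remainder by (simp add: abs_mult power_abs)
  also have "\<dots> \<le> (exp L + 3) * \<bar>w\<bar>^3"
    by (rule mult_right_mono[OF _ zero_le_power[OF abs_ge_zero]]) fact
  finally show ?thesis .
next
  case False
  then have "1 \<le> \<bar>w\<bar>^3" "\<bar>w\<bar> \<le> \<bar>w\<bar>^3" "\<bar>w\<bar>^2 \<le> \<bar>w\<bar>^3"
    using power_increasing[of 1 3 "\<bar>w\<bar>"] power_increasing[of 2 3 "\<bar>w\<bar>"] by auto
  moreover have "exp w \<le> exp L * \<bar>w\<bar>^3"
  proof -
    have "exp w \<le> exp L"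
      using assms(1) by simp
    also have "\<dots> \<le> exp L * \<bar>w\<bar>^3"
      using mult_left_mono[OF \<open>1 \<le> \<bar>w\<bar>^3\<close>, of "exp L"] by simp
    finally show ?thesis .
  qed
  moreover have "\<bar>exp w - 1 - w - w^2/2\<bar> \<le> exp w + 1 + \<bar>w\<bar> + \<bar>w\<bar>^2"
    using exp_gt_zero[of w] zero_le_power2[of w] unfolding power2_abs by arith
  ultimately show ?thesis
    by (simp add: algebra_simps)
qed

lemma abs_exp_second_order_remainder_le:
  fixes c r L Q V \<rho> :: real
  assumes "c \<ge> 0" "r \<ge> 1" "L \<ge> 0"
    and Q: "\<bar>Q\<bar> \<le> c / r" and V: "\<bar>V\<bar> \<le> c / r^2" and \<rho>: "\<bar>\<rho>\<bar> \<le> c / r^3"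
    and upper: "Q + V + \<rho> \<le> L"
  shows "\<bar>exp (Q + V + \<rho>) - 1 - Q - V - Q^2/2\<bar> \<le> ((exp L + 3) * 27 * c^3 + 4 * c^2 + c) / r^3"
proof -
  define w where "w = Q + V + \<rho>"
  have "c / r^2 \<le> c / r" "c / r^3 \<le> c / r^2"
    using assms(1,2) by (auto intro!: divide_left_mono simp: power2_eq_square power3_eq_cube)
  then have V': "\<bar>V\<bar> \<le> c / r" and \<rho>': "\<bar>\<rho>\<bar> \<le> c / r^2" "\<bar>\<rho>\<bar> \<le> c / r"
    using V \<rho> by linarith+
  have "\<bar>w\<bar>^3 \<le> (3 * c / r)^3"
    unfolding w_def using Q V' \<rho>' by (intro power_mono) auto
  also have "(3 * c / r)^3 = 27 * c^3 / r^3"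
    by (simp add: power_divide power_mult_distrib)
  finally have "(exp L + 3) * \<bar>w\<bar>^3 \<le> (exp L + 3) * (27 * c^3 / r^3)"
    by (intro mult_left_mono) (auto intro: add_nonneg_nonneg)
  then have "\<bar>exp w - 1 - w - w^2/2\<bar> \<le> (exp L + 3) * (27 * c^3 / r^3)"
    using abs_exp_minus_taylor2_le[of w L] upper assms(3) unfolding w_def by linarith
  moreover have "\<bar>(V + \<rho>) * (2 * Q + V + \<rho>)\<bar> \<le> (2 * c / r^2) * (4 * c / r)"
    unfolding abs_mult using Q V V' \<rho> \<rho>' assms(1,2) by (intro mult_mono) auto
  moreover have "(2 * c / r^2) * (4 * c / r) = 8 * c^2 / r^3"
    by (simp add: power2_eq_square power3_eq_cube)
  moreover have "exp w - 1 - Q - V - Q^2/2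
      = (exp w - 1 - w - w^2/2) + \<rho> + (V + \<rho>) * (2 * Q + V + \<rho>) / 2"
    unfolding w_def by (simp add: power2_eq_square algebra_simps)
  ultimately have "\<bar>exp w - 1 - Q - V - Q^2/2\<bar> \<le> (exp L + 3) * (27 * c^3 / r^3) + c / r^3 + 4 * c^2 / r^3"
    using \<rho> by arith
  also have "\<dots> = ((exp L + 3) * 27 * c^3 + 4 * c^2 + c) / r^3"
    by (simp add: add_divide_distrib)
  finally show ?thesis
    by (simp add: w_def)
qed

lemma exp_remainder_coefficient_le:
  fixes A s :: real
  assumes "A \<ge> 0" "s \<ge> 0"
  defines "c \<equiv> 2 * A * (1 + s)^5"
  shows "(exp A + 3) * 27 * c^3 + 4 * c^2 + c \<le> ((exp A + 3) * 216 * A^3 + 16 * A^2 + 2 * A) * (1 + s)^15"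
proof -
  have "(1 + s)^10 \<le> (1 + s)^15" "(1 + s)^5 \<le> (1 + s)^15"
    using assms(2) by (auto intro!: power_increasing)
  then have "c^2 \<le> 4 * A^2 * (1 + s)^15" "c \<le> 2 * A * (1 + s)^15"
    using assms(1) by (auto simp: c_def power_mult_distrib power_mult[symmetric] intro: mult_left_mono)
  moreover have "c^3 = 8 * A^3 * (1 + s)^15"
    by (simp add: c_def power_mult_distrib power_mult[symmetric])
  ultimately show ?thesis
    by (simp add: algebra_simps)
qed

lemma le_exp_quarter_square_mult_norm:
  fixes \<zeta> :: complex and M Q :: real
  assumes "norm \<zeta> \<le> M" "Q \<ge> 0"
  shows "Q \<le> exp (M^2/4) * norm (of_real Q * exp (\<zeta>^2/4))"
proof -
  have "\<bar>Im \<zeta>\<bar> \<le> M"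
    using abs_Im_le_cmod[of \<zeta>] assms by linarith
  then have "(Im \<zeta>)^2 \<le> M^2"
    by (metis abs_ge_zero power2_abs power_mono)
  moreover have "Re (\<zeta>^2 / 4) = (Re \<zeta>)^2 / 4 - (Im \<zeta>)^2 / 4"
    by (simp add: power2_eq_square)
  ultimately have "0 \<le> M^2/4 + Re (\<zeta>^2 / 4)"
    using zero_le_power2[of "Re \<zeta>"] by linarith
  then have "1 \<le> exp (M^2/4) * norm (exp (\<zeta>^2/4))"
    by (simp add: norm_exp_eq_Re flip: exp_add)
  then show ?thesis
    using mult_left_mono[of 1 _ Q] assms(2) by (simp add: norm_mult mult.left_commute)
qed

lemma one_over_sqrt_cube_eq_powr:
  fixes b :: real
  assumes "b > 0"
  shows "1 / sqrt b ^ 3 = b powr (-3/2)"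
  using assms by (simp add: powr_half_sqrt[symmetric] powr_powr powr_minus divide_simps flip: powr_realpow)

section \<open>Euler's integral representation\<close>

definition scaled_beta_kernel :: "real \<Rightarrow> real \<Rightarrow> real \<Rightarrow> real \<Rightarrow> real" where
  "scaled_beta_kernel \<alpha> \<beta> r s = (if s < r then (s/r) powr (\<alpha> - 1) * (1 - s/r) powr (\<beta> - 1) else 0)"

lemma scaled_beta_kernel_nonneg: "scaled_beta_kernel \<alpha> \<beta> r s \<ge> 0"
  by (simp add: scaled_beta_kernel_def)

lemma has_integral_scaled_beta_kernel:
  assumes "r > 0" "\<alpha> > 0" "\<beta> > 0"
  shows "(scaled_beta_kernel \<alpha> \<beta> r has_integral r * Beta \<alpha> \<beta>) {0<..}"
proof -
  let ?f = "\<lambda>t::real. t powr (\<alpha> - 1) * (1 - t) powr (\<beta> - 1)"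
  have "(?f has_integral (\<bar>1/r\<bar> *\<^sub>R (r * Beta \<alpha> \<beta>))) {0..1}"
    using has_integral_Beta_real[OF assms(2,3)] assms(1) by simp
  then have "((\<lambda>x. ?f ((1/r) * x)) has_integral r * Beta \<alpha> \<beta>) ((\<lambda>x. x / (1/r)) ` {0..1})"
    using has_integral_stretch_real_iff[of "1/r" ?f] assms(1) by simp
  moreover have "(\<lambda>x. x / (1/r)) ` {0..1} = (\<lambda>x. r * x) ` {0..1}"
    by (simp add: mult.commute)
  moreover have "(\<lambda>x. r * x) ` {0..1} = {0..r}"
    using assms(1) by (simp add: image_mult_atLeastAtMost_if)
  ultimately have "((\<lambda>x. ?f (x / r)) has_integral r * Beta \<alpha> \<beta>) {0<..<r}"
    by (simp add: has_integral_Icc_iff_Ioo)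
  then have "((\<lambda>x. if x \<in> {0<..<r} then ?f (x / r) else 0) has_integral r * Beta \<alpha> \<beta>) {0<..}"
    by (subst has_integral_restrict) auto
  then show ?thesis
    by (rule has_integral_eq[rotated]) (auto simp: scaled_beta_kernel_def)
qed

lemma has_integral_scaled_beta_kernel_moment:
  assumes "r > 0" "\<alpha> > 0" "\<beta> > 0"
  shows "((\<lambda>s. (s/r)^k * scaled_beta_kernel \<alpha> \<beta> r s) has_integral r * Beta (\<alpha> + k) \<beta>) {0<..}"
proof -
  have "(scaled_beta_kernel (\<alpha> + k) \<beta> r has_integral r * Beta (\<alpha> + k) \<beta>) {0<..}"
    using assms by (intro has_integral_scaled_beta_kernel) auto
  then show ?thesis
  proof (rule has_integral_eq[rotated])
    fix s :: real assume "s \<in> {0<..}"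
    then have "s / r > 0" using assms(1) by simp
    then show "scaled_beta_kernel (\<alpha> + k) \<beta> r s = (s/r)^k * scaled_beta_kernel \<alpha> \<beta> r s"
      by (auto simp: scaled_beta_kernel_def powr_add powr_realpow[symmetric] powr_diff)
  qed
qed

lemma Beta_mult_Gamma_ratio_eq_pochhammer_ratio:
  fixes a b :: real
  assumes "a > 0" "b > a"
  shows "Gamma b / (Gamma a * Gamma (b - a)) * Beta (a + k) (b - a) = pochhammer a k / pochhammer b k"
proof -
  have "a \<notin> \<int>\<^sub>\<le>\<^sub>0" "b \<notin> \<int>\<^sub>\<le>\<^sub>0"
    using assms by (auto elim!: nonpos_Ints_cases)
  moreover have "Gamma a > 0" "Gamma b > 0" "Gamma (b - a) > 0" "Gamma (b + k) > 0"
    using assms by (auto intro!: Gamma_real_pos)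
  ultimately show ?thesis
    by (simp add: pochhammer_Gamma Beta_def field_simps)
qed

lemma norm_exp_partial_sum_le:
  fixes z :: complex and u W :: real
  assumes "0 \<le> W" "W \<noteq> 0 \<Longrightarrow> \<bar>u\<bar> \<le> 1"
  shows "norm (\<Sum>k<n. z^k / fact k * of_real (u^k * W)) \<le> exp (norm z) * W"
proof -
  have "norm (\<Sum>k<n. z^k / fact k * of_real (u^k * W)) \<le> (\<Sum>k<n. norm z ^ k / fact k * W)"
  proof (rule sum_norm_le)
    fix k
    have "\<bar>u\<bar> ^ k * W \<le> W"
      using assms by (cases "W = 0") (auto intro: mult_left_le_one_le power_le_one)
    then have "norm z ^ k / fact k * (\<bar>u\<bar> ^ k * W) \<le> norm z ^ k / fact k * W"
      by (rule mult_left_mono) simp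
    then show "norm (z^k / fact k * of_real (u^k * W)) \<le> norm z ^ k / fact k * W"
      using assms(1) by (simp add: norm_mult norm_divide norm_power abs_mult power_abs)
  qed
  also have "\<dots> = (\<Sum>k<n. norm z ^ k / fact k) * W"
    by (simp add: sum_distrib_right)
  also have "\<dots> \<le> exp (norm z) * W"
    using assms(1) by (intro mult_right_mono sum_exp_series_le_exp) simp_all
  finally show ?thesis .
qed

lemma exp_moment_series_sums_integral:
  fixes z :: complex and u W :: "real \<Rightarrow> real" and S :: "real set"
  assumes moments: "\<And>k. ((\<lambda>s. u s ^ k * W s) has_integral m k) S"
    and W_nonneg: "\<And>s. s \<in> S \<Longrightarrow> 0 \<le> W s"
    and u_bounded: "\<And>s. s \<in> S \<Longrightarrow> W s \<noteq> 0 \<Longrightarrow> \<bar>u s\<bar> \<le> 1"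
  shows "(\<lambda>s. exp (z * u s) * W s) integrable_on S"
    and "(\<lambda>k. z^k / fact k * m k) sums integral S (\<lambda>s. exp (z * u s) * W s)"
proof -
  define f where "f n s = (\<Sum>k<n. z^k / fact k * of_real (u s ^ k * W s))" for n s
  have f_integral: "(f n has_integral (\<Sum>k<n. z^k / fact k * m k)) S" for n
    unfolding f_def by (intro has_integral_sum has_integral_mult_right has_integral_of_real moments) auto
  then have f_integrable: "f n integrable_on S" for n
    by blast
  have bound_integrable: "(\<lambda>s. exp (norm z) * W s) integrable_on S"
    using moments[of 0] by (auto intro: integrable_on_cmult_left has_integral_integrable)
  have f_bound: "norm (f n s) \<le> exp (norm z) * W s" if "s \<in> S" for n s
    unfolding f_def using W_nonneg u_bounded that by (intro norm_exp_partial_sum_le) auto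
  have f_limit: "(\<lambda>n. f n s) \<longlonglongrightarrow> exp (z * u s) * W s" for s
  proof -
    have "(\<lambda>n. (\<Sum>k<n. (z * u s)^k /\<^sub>R fact k) * W s) \<longlonglongrightarrow> exp (z * u s) * W s"
      using exp_converges[of "z * u s"] by (intro tendsto_mult_right) (simp add: sums_def)
    moreover have "(\<Sum>k<n. (z * u s)^k /\<^sub>R fact k) * W s = f n s" for n
      unfolding f_def sum_distrib_right
      by (intro sum.cong refl) (simp add: scaleR_conv_of_real power_mult_distrib divide_inverse mult_ac)
    ultimately show ?thesis by simp
  qed
  note dominated = dominated_convergence[OF f_integrable bound_integrable f_bound f_limit]
  show "(\<lambda>s. exp (z * u s) * W s) integrable_on S"
    using dominated(1) by simp
  have "integral S (f n) = (\<Sum>k<n. z^k / fact k * m k)" for n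
    using f_integral by (rule integral_unique)
  then show "(\<lambda>k. z^k / fact k * m k) sums integral S (\<lambda>s. exp (z * u s) * W s)"
    using dominated(2) unfolding sums_def by simp
qed

lemma hyp1F1_Euler_integral:
  fixes a b r :: real and z :: complex
  assumes "a > 0" "b > a" "r > 0"
  shows "(\<lambda>s. exp (z * (s/r)) * scaled_beta_kernel a (b - a) r s) integrable_on {0<..}"
    and "hyp1F1 a b z = Gamma b / (Gamma a * Gamma (b - a) * r) *
           integral {0<..} (\<lambda>s. exp (z * (s/r)) * scaled_beta_kernel a (b - a) r s)"
proof -
  have moments: "((\<lambda>s. (s/r)^k * scaled_beta_kernel a (b - a) r s) has_integral r * Beta (a + k) (b - a)) {0<..}"
    for k using assms by (intro has_integral_scaled_beta_kernel_moment) auto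
  have "\<bar>s / r\<bar> \<le> 1" if "s \<in> {0<..}" "scaled_beta_kernel a (b - a) r s \<noteq> 0" for s
    using assms(3) that by (auto simp: scaled_beta_kernel_def split: if_splits)
  note series = exp_moment_series_sums_integral[of "\<lambda>s. s/r", OF moments scaled_beta_kernel_nonneg this, of z]
  show "(\<lambda>s. exp (z * (s/r)) * scaled_beta_kernel a (b - a) r s) integrable_on {0<..}"
    using series(1) assms by simp
  have "Gamma b / (Gamma a * Gamma (b - a) * r) * (z^k / fact k * (r * Beta (a + k) (b - a)))
      = pochhammer a k / pochhammer b k * z^k / fact k" for k
  proof -
    have coeff: "Gamma b / (Gamma a * Gamma (b - a) * r) * (r * Beta (a + k) (b - a))
        = pochhammer a k / pochhammer b k"
      using Beta_mult_Gamma_ratio_eq_pochhammer_ratio[OF assms(1,2), of k] assms(3) by simp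
    have "Gamma b / (Gamma a * Gamma (b - a) * r) * (z^k / fact k * (r * Beta (a + k) (b - a)))
        = complex_of_real (Gamma b / (Gamma a * Gamma (b - a) * r) * (r * Beta (a + k) (b - a))) * z^k / fact k"
      by (simp only: of_real_mult) (simp add: mult_ac)
    then show ?thesis
      unfolding coeff by simp
  qed
  moreover have "(\<lambda>k. Gamma b / (Gamma a * Gamma (b - a) * r) * (z^k / fact k * (r * Beta (a + k) (b - a))))
      sums (Gamma b / (Gamma a * Gamma (b - a) * r) *
           integral {0<..} (\<lambda>s. exp (z * (s/r)) * scaled_beta_kernel a (b - a) r s))"
    using series(2) assms by (intro sums_mult) simp_all
  ultimately show "hyp1F1 a b z = Gamma b / (Gamma a * Gamma (b - a) * r) *
           integral {0<..} (\<lambda>s. exp (z * (s/r)) * scaled_beta_kernel a (b - a) r s)"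
    unfolding hyp1F1_def by (simp add: sums_iff)
qed

section \<open>The kernel and its expansion\<close>

definition euler_kernel :: "real \<Rightarrow> real \<Rightarrow> real \<Rightarrow> real" where
  "euler_kernel A r s = (if s < r then exp (r * s) * (1 - s/r) powr (r^2 - A) else 0)"

definition euler_kernel_expansion :: "real \<Rightarrow> real \<Rightarrow> real \<Rightarrow> real" where
  "euler_kernel_expansion A r s =
     1 + (A * s - s^3/3) / r + (A * s^2/2 - s^4/4 + (A * s - s^3/3)^2/2) / r^2"

lemma Euler_integrand_parabolic_scaling:
  fixes a b s :: real and \<zeta> :: complex
  assumes "b > 0" "s > 0"
  defines "r \<equiv> sqrt b"
  shows "exp (\<zeta> * s) * (s powr (a - 1) * euler_kernel (a + 1) r s)
         = r powr (a - 1) * (exp (b * (1 + b powr (-1/2) * \<zeta>) * (s/r)) * scaled_beta_kernel a (b - a) r s)"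
proof (cases "s < r")
  case True
  have r: "r > 0" "r^2 = b" "b powr (-1/2) = 1 / r"
    using assms(1) by (auto simp: r_def powr_minus_divide powr_half_sqrt)
  have "complex_of_real b * (1 + b powr (-1/2) * \<zeta>) * (s/r) = complex_of_real (r * s) + \<zeta> * s"
    unfolding r(3) using r(1) by (simp add: field_simps power2_eq_square flip: r(2))
  moreover have "s powr (a - 1) = r powr (a - 1) * (s/r) powr (a - 1)"
    using r(1) assms(2) by (simp add: powr_divide)
  ultimately show ?thesis
    using True r by (simp add: scaled_beta_kernel_def euler_kernel_def exp_add exp_of_real mult_ac diff_diff_eq
        flip: of_real_mult)
next
  case False
  then show ?thesis by (simp add: scaled_beta_kernel_def euler_kernel_def)
qed

lemma hyp1F1_parabolic_scaling:
  fixes a b :: real and \<zeta> :: complex and F :: "real \<Rightarrow> complex"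
  assumes "a > 0" "b > a"
  defines "F \<equiv> \<lambda>s. exp (\<zeta> * s) * of_real (s powr (a - 1) * euler_kernel (a + 1) (sqrt b) s)"
  shows "F integrable_on {0<..}"
    and "hyp1F1 a b (b * (1 + b powr (-1/2) * \<zeta>))
           = Gamma b / Gamma (b - a) * b powr (- a / 2) / Gamma a * integral {0<..} F"
proof -
  define r where "r = sqrt b"
  define z where "z = complex_of_real b * (1 + b powr (-1/2) * \<zeta>)"
  define E where "E = (\<lambda>s. exp (z * (s/r)) * scaled_beta_kernel a (b - a) r s)"
  have r: "r > 0"
    using assms by (simp add: r_def)
  note Euler = hyp1F1_Euler_integral[OF assms(1,2) r, of z, folded E_def]
  have "(F has_integral r powr (a - 1) * integral {0<..} E) {0<..}"
    using has_integral_mult_right[OF integrable_integral[OF Euler(1)], of "r powr (a - 1)"]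
  proof (rule has_integral_eq[rotated])
    fix s :: real assume "s \<in> {0<..}"
    then show "r powr (a - 1) * E s = F s"
      using Euler_integrand_parabolic_scaling[where a = a and b = b and s = s and \<zeta> = \<zeta>] assms
      by (simp add: E_def F_def z_def r_def)
  qed
  then show "F integrable_on {0<..}"
    by blast
  have F: "integral {0<..} F = r powr (a - 1) * integral {0<..} E"
    using \<open>(F has_integral _) _\<close> by (rule integral_unique)
  have "r * r powr (a - 1) = b powr (a / 2)"
    using r assms by (simp add: r_def powr_half_sqrt[symmetric] powr_powr flip: powr_add) (simp add: field_simps)
  then have "b powr (- a / 2) * r powr (a - 1) = 1 / r"
    using r assms by (simp add: powr_minus_divide field_simps)
  then have coeff: "Gamma b / (Gamma a * Gamma (b - a) * r)
      = Gamma b / Gamma (b - a) * b powr (- a / 2) / Gamma a * r powr (a - 1)"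
    by (simp add: mult.assoc)
  show "hyp1F1 a b (b * (1 + b powr (-1/2) * \<zeta>))
      = Gamma b / Gamma (b - a) * b powr (- a / 2) / Gamma a * integral {0<..} F"
    using Euler(2) unfolding coeff F z_def by (simp only: of_real_mult mult.assoc)
qed

lemma euler_kernel_le_gauss:
  fixes A r s :: real
  assumes "A \<ge> 0" "r > 0" "r^2 \<ge> A" "s > 0"
  shows "\<bar>euler_kernel A r s\<bar> \<le> exp (3 * A / 2) * exp (- (s^2) / 2)"
proof (cases "s < r")
  case True
  define x where "x = s / r"
  have x: "0 < x" "x < 1" "s = r * x"
    using assms(2,4) True by (auto simp: x_def)
  have "euler_kernel A r s = exp ((r^2 - A) * (x + ln (1 - x)) + A * x)"
    using True x assms(2) by (simp add: euler_kernel_def powr_def x_def[symmetric] exp_add[symmetric]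
        power2_eq_square algebra_simps)
  also have "\<dots> \<le> exp ((r^2 - A) * (- (x^2) / 2) + A * x)"
  proof -
    have "x + ln (1 - x) \<le> - (x^2) / 2"
      using ln_one_minus_plus_taylor_nonpos[of x 2] x by (simp add: eval_nat_numeral)
    then have "(r^2 - A) * (x + ln (1 - x)) \<le> (r^2 - A) * (- (x^2) / 2)"
      using assms(3) by (intro mult_left_mono) auto
    then show ?thesis by simp
  qed
  also have "\<dots> \<le> exp (- (s^2) / 2 + 3 * A / 2)"
  proof -
    have "A * x^2 \<le> A" "A * x \<le> A"
      using x assms(1) by (auto intro!: mult_left_le power_le_one)
    moreover have "(r^2 - A) * (- (x^2) / 2) + A * x = - (s^2) / 2 + (A * x^2 / 2 + A * x)"
      by (simp add: x(3) power_mult_distrib field_simps)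
    ultimately show ?thesis by simp
  qed
  finally show ?thesis
    by (simp add: euler_kernel_def exp_add[symmetric] algebra_simps)
next
  case False
  then show ?thesis by (simp add: euler_kernel_def)
qed

lemma log_euler_kernel_plus_half_square_le:
  fixes A r s :: real
  assumes "A \<ge> 0" "r > 0" "0 < s" "s \<le> r/2"
  shows "r * s + (r^2 - A) * ln (1 - s/r) + s^2/2 \<le> A"
proof -
  define x where "x = s / r"
  have x: "0 < x" "x \<le> 1/2"
    using assms(2-4) by (auto simp: x_def field_simps)
  have "r^2 * (ln (1 - x) + x + x^2/2) \<le> 0"
    using ln_one_minus_second_order(1)[of x] x by (simp add: mult_nonneg_nonpos)
  moreover have "A * (- ln (1 - x)) \<le> A"
  proof -
    have "- ln (1 - x) \<le> - ln (1/2)"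
      using x by simp
    then have "- ln (1 - x) \<le> 1"
      using ln_2_less_1 by (simp add: ln_div)
    then show ?thesis
      using mult_left_mono[of "- ln (1 - x)" 1 A] assms(1) by simp
  qed
  moreover have "r * s + (r^2 - A) * ln (1 - s/r) + s^2/2 = r^2 * (ln (1 - x) + x + x^2/2) + A * (- ln (1 - x))"
    using assms(2) by (simp add: x_def power2_eq_square algebra_simps)
  ultimately show ?thesis
    by linarith
qed

lemma abs_log_euler_kernel_expansion_remainder_le:
  fixes A r s :: real
  assumes "A \<ge> 1" "r > 0" "0 < s" "s \<le> r/2"
  shows "\<bar>r * s + (r^2 - A) * ln (1 - s/r) + s^2/2 - (A * s - s^3/3) / r - (A * s^2/2 - s^4/4) / r^2\<bar>
           \<le> 2 * A * (1 + s)^5 / r^3"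
proof -
  define x where "x = s / r"
  have x: "0 < x" "x \<le> 1/2" "s = r * x"
    using assms(2-4) by (auto simp: x_def field_simps)
  define L2 where "L2 = ln (1 - x) + x + x^2/2"
  define L4 where "L4 = ln (1 - x) + x + x^2/2 + x^3/3 + x^4/4"
  have "r * s + (r^2 - A) * ln (1 - s/r) + s^2/2 - (A * s - s^3/3) / r - (A * s^2/2 - s^4/4) / r^2
      = r^2 * L4 - A * L2"
    unfolding L2_def L4_def x_def using assms(2)
    by (simp add: field_simps power2_eq_square power3_eq_cube power4_eq_xxxx)
  also have "\<bar>\<dots>\<bar> \<le> r^2 * \<bar>L4\<bar> + A * \<bar>L2\<bar>"
    using abs_triangle_ineq4[of "r^2 * L4" "A * L2"] assms(1) by (simp add: abs_mult)
  also have "\<dots> \<le> r^2 * x^5 + A * x^3"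
    using ln_one_minus_fourth_order[of x] ln_one_minus_second_order(2)[of x] x assms(1)
    unfolding L2_def L4_def by (intro add_mono mult_left_mono) auto
  also have "\<dots> = (s^5 + A * s^3) / r^3"
    using assms(2) by (simp add: x_def power_divide field_simps eval_nat_numeral)
  also have "\<dots> \<le> 2 * A * (1 + s)^5 / r^3"
    using abs_binomial_le_one_plus_power[where c = 1 and d = A and A = A and i = 5 and j = 3 and n = 5] assms(1-3)
    by (intro divide_right_mono) auto
  finally show ?thesis .
qed

lemma abs_exp_log_euler_kernel_remainder_le:
  fixes A r s :: real
  assumes "A \<ge> 1" "r \<ge> 1" "0 < s" "s \<le> r/2"
  defines "Q \<equiv> (A * s - s^3/3) / r" and "V \<equiv> (A * s^2/2 - s^4/4) / r^2"
    and "w \<equiv> r * s + (r^2 - A) * ln (1 - s/r) + s^2/2"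
  shows "\<bar>exp w - 1 - Q - V - Q^2/2\<bar> \<le> ((exp A + 3) * 216 * A^3 + 16 * A^2 + 2 * A) * (1 + s)^15 / r^3"
proof -
  define c where "c = 2 * A * (1 + s)^5"
  have r: "r > 0"
    using assms(2) by auto
  have c: "c \<ge> 0" "2 * A * (1 + s)^3 \<le> c" "2 * A * (1 + s)^4 \<le> c"
    using assms(1,3) by (auto simp: c_def intro!: mult_left_mono power_increasing)
  have div: "\<bar>x / d\<bar> \<le> c / d" if "\<bar>x\<bar> \<le> c" "d > 0" for x d
    using that by (simp add: abs_divide divide_right_mono)
  have "\<bar>A * s - s^3/3\<bar> \<le> 2 * A * (1 + s)^3"
    using abs_binomial_le_one_plus_power[where c = A and d = "-1/3" and A = A and i = 1 and j = 3 and n = 3]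
      assms(1,3) by simp
  then have "\<bar>Q\<bar> \<le> c / r"
    unfolding Q_def using c(2) r by (intro div) auto
  moreover have "\<bar>A * s^2/2 - s^4/4\<bar> \<le> 2 * A * (1 + s)^4"
    using abs_binomial_le_one_plus_power[where c = "A/2" and d = "-1/4" and A = A and i = 2 and j = 4 and n = 4]
      assms(1,3) by simp
  then have "\<bar>V\<bar> \<le> c / r^2"
    unfolding V_def using c(3) r by (intro div) auto
  moreover have "\<bar>w - Q - V\<bar> \<le> c / r^3" "w \<le> A"
    using abs_log_euler_kernel_expansion_remainder_le[of A r s] log_euler_kernel_plus_half_square_le[of A r s]
      assms r unfolding w_def Q_def V_def c_def by (simp_all add: diff_diff_eq)
  ultimately have "\<bar>exp w - 1 - Q - V - Q^2/2\<bar> \<le> ((exp A + 3) * 27 * c^3 + 4 * c^2 + c) / r^3"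
    using abs_exp_second_order_remainder_le[of c r A Q V "w - Q - V"] assms(1,2) c(1) by simp
  also have "\<dots> \<le> ((exp A + 3) * 216 * A^3 + 16 * A^2 + 2 * A) * (1 + s)^15 / r^3"
    using exp_remainder_coefficient_le[of A s] assms(1,3) r by (intro divide_right_mono) (simp_all add: c_def)
  finally show ?thesis .
qed

lemma euler_kernel_expansion_near:
  fixes A r s :: real
  assumes "A \<ge> 1" "r \<ge> 1" "0 < s" "s \<le> r/2"
  shows "\<bar>euler_kernel A r s - exp (- (s^2) / 2) * euler_kernel_expansion A r s\<bar>
           \<le> ((exp A + 3) * 216 * A^3 + 16 * A^2 + 2 * A) * (1 + s)^15 * exp (- (s^2) / 2) / r^3"
proof -
  define Q where "Q = (A * s - s^3/3) / r"
  define V where "V = (A * s^2/2 - s^4/4) / r^2"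
  define w where "w = r * s + (r^2 - A) * ln (1 - s/r) + s^2/2"
  have "s < r" "1 - s/r \<noteq> 0" "r \<noteq> 0"
    using assms by auto
  then have "euler_kernel A r s = exp (- (s^2) / 2) * exp w"
    by (simp add: euler_kernel_def w_def powr_def exp_add[symmetric])
  moreover have "euler_kernel_expansion A r s = 1 + Q + V + Q^2/2"
    using \<open>r \<noteq> 0\<close> by (simp add: euler_kernel_expansion_def Q_def V_def field_simps)
  ultimately have "\<bar>euler_kernel A r s - exp (- (s^2) / 2) * euler_kernel_expansion A r s\<bar>
      = exp (- (s^2) / 2) * \<bar>exp w - 1 - Q - V - Q^2/2\<bar>"
    by (simp add: abs_mult flip: right_diff_distrib)
  also have "\<dots> \<le> exp (- (s^2) / 2) * (((exp A + 3) * 216 * A^3 + 16 * A^2 + 2 * A) * (1 + s)^15 / r^3)"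
    using abs_exp_log_euler_kernel_remainder_le[OF assms] unfolding Q_def V_def w_def
    by (rule mult_left_mono) simp
  finally show ?thesis
    by (simp add: mult_ac)
qed

lemma abs_euler_kernel_expansion_le:
  fixes A r s :: real
  assumes "A \<ge> 1" "r \<ge> 1" "s \<ge> 0"
  shows "\<bar>euler_kernel_expansion A r s\<bar> \<le> (1 + 4 * A + 2 * A^2) * (1 + s)^6"
proof -
  define q where "q = A * s - s^3/3"
  define v where "v = A * s^2/2 - s^4/4"
  have "\<bar>q\<bar> \<le> 2 * A * (1 + s)^3"
    using abs_binomial_le_one_plus_power[where c = A and d = "-1/3" and A = A and i = 1 and j = 3 and n = 3]
      assms by (simp add: q_def)
  also have "\<dots> \<le> 2 * A * (1 + s)^6"
    using assms by (intro mult_left_mono power_increasing) auto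
  finally have q: "\<bar>q\<bar> \<le> 2 * A * (1 + s)^6" .
  have "\<bar>v\<bar> \<le> 2 * A * (1 + s)^4"
    using abs_binomial_le_one_plus_power[where c = "A/2" and d = "-1/4" and A = A and i = 2 and j = 4 and n = 4]
      assms by (simp add: v_def)
  also have "\<dots> \<le> 2 * A * (1 + s)^6"
    using assms by (intro mult_left_mono power_increasing) auto
  finally have v: "\<bar>v\<bar> \<le> 2 * A * (1 + s)^6" .
  have "q^2 = \<bar>q\<bar>^2" by simp
  also have "\<dots> \<le> (2 * A * (1 + s)^3)^2"
    using \<open>\<bar>q\<bar> \<le> 2 * A * (1 + s)^3\<close> by (intro power_mono) auto
  finally have q2: "q^2 / 2 \<le> 2 * A^2 * (1 + s)^6"
    by (simp add: power_mult_distrib power_mult[symmetric])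
  have shrink: "\<bar>x / r\<bar> \<le> \<bar>x\<bar>" "\<bar>x / r^2\<bar> \<le> \<bar>x\<bar>" for x
    using assms(2) one_le_power[of r 2] by (auto simp: abs_divide divide_le_eq mult_le_cancel_left1)
  have "euler_kernel_expansion A r s = 1 + q / r + v / r^2 + (q^2 / 2) / r^2"
    unfolding euler_kernel_expansion_def q_def v_def by (simp add: add_divide_distrib)
  then have "\<bar>euler_kernel_expansion A r s\<bar> \<le> 1 + \<bar>q / r\<bar> + \<bar>v / r^2\<bar> + \<bar>(q^2 / 2) / r^2\<bar>"
    by arith
  also have "\<dots> \<le> 1 + \<bar>q\<bar> + \<bar>v\<bar> + q^2 / 2"
    using shrink[of q] shrink[of v] shrink[of "q^2 / 2"] by simp
  also have "\<dots> \<le> (1 + s)^6 + 2 * A * (1 + s)^6 + 2 * A * (1 + s)^6 + 2 * A^2 * (1 + s)^6"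
    using q v q2 assms(3) one_le_power[of "1 + s" 6] by linarith
  finally show ?thesis
    by (simp add: algebra_simps)
qed

lemma abs_euler_kernel_minus_expansion_le:
  fixes A r s :: real
  assumes "A \<ge> 1" "r \<ge> 1" "r^2 \<ge> A" "s > 0"
  shows "\<bar>euler_kernel A r s - exp (- (s^2) / 2) * euler_kernel_expansion A r s\<bar>
           \<le> (exp (3 * A / 2) + 1 + 4 * A + 2 * A^2) * (1 + s)^6 * exp (- (s^2) / 2)"
proof -
  define Y where "Y = exp (- (s^2) / 2)"
  have "\<bar>Y * euler_kernel_expansion A r s\<bar> \<le> Y * ((1 + 4 * A + 2 * A^2) * (1 + s)^6)"
    using abs_euler_kernel_expansion_le[of A r s] assms by (simp add: abs_mult Y_def mult_left_mono)
  moreover have "\<bar>euler_kernel A r s\<bar> \<le> exp (3 * A / 2) * Y"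
    using euler_kernel_le_gauss[of A r s] assms by (simp add: Y_def)
  moreover have "exp (3 * A / 2) * Y * 1 \<le> exp (3 * A / 2) * Y * (1 + s)^6"
    using assms(4) by (intro mult_left_mono one_le_power) (simp_all add: Y_def)
  ultimately show ?thesis
    unfolding Y_def[symmetric] by (simp add: algebra_simps)
qed

lemma euler_kernel_expansion_far:
  fixes A r s :: real
  assumes "A \<ge> 1" "r \<ge> 1" "r^2 \<ge> A" "r < 2 * s"
  shows "\<bar>euler_kernel A r s - exp (- (s^2) / 2) * euler_kernel_expansion A r s\<bar>
           \<le> 8 * (exp (3 * A / 2) + 1 + 4 * A + 2 * A^2) * (1 + s)^9 * exp (- (s^2) / 2) / r^3"
proof -
  define D where "D = (exp (3 * A / 2) + 1 + 4 * A + 2 * A^2) * (1 + s)^6 * exp (- (s^2) / 2)"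
  have s: "s > 0" "r > 0"
    using assms(2,4) by auto
  have "r^3 \<le> (2 * s)^3"
    using assms(4) s by (intro power_mono) auto
  also have "\<dots> \<le> 8 * (1 + s)^3"
    using power_le_one_plus_power[of s 3 3] s by simp
  finally have "D * r^3 \<le> D * (8 * (1 + s)^3)"
    using assms(1) by (intro mult_left_mono) (simp_all add: D_def)
  then have "D \<le> 8 * (exp (3 * A / 2) + 1 + 4 * A + 2 * A^2) * (1 + s)^9 * exp (- (s^2) / 2) / r^3"
    using s by (simp add: D_def pos_le_divide_eq power_add[symmetric] algebra_simps)
  then show ?thesis
    using abs_euler_kernel_minus_expansion_le[of A r s] assms s unfolding D_def by linarith
qed

lemma euler_kernel_expansion_error:
  fixes A :: real
  assumes "A \<ge> 1"
  obtains K where "K \<ge> 0"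
    and "\<And>r s. r \<ge> 1 \<Longrightarrow> r^2 \<ge> A \<Longrightarrow> s > 0 \<Longrightarrow>
           \<bar>euler_kernel A r s - exp (- (s^2) / 2) * euler_kernel_expansion A r s\<bar>
             \<le> K * (1 + s)^15 * exp (- (s^2) / 2) / r^3"
proof
  define K_near where "K_near = (exp A + 3) * 216 * A^3 + 16 * A^2 + 2 * A"
  define K_far where "K_far = 8 * (exp (3 * A / 2) + 1 + 4 * A + 2 * A^2)"
  have K: "K_near \<ge> 0" "K_far \<ge> 0"
    using assms by (simp_all add: K_near_def K_far_def)
  show "K_near + K_far \<ge> 0"
    using K by simp
  fix r s :: real
  assume r: "r \<ge> 1" "r^2 \<ge> A" and s: "s > 0"
  have "K_near * (1 + s)^15 \<le> (K_near + K_far) * (1 + s)^15"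
    "K_far * (1 + s)^9 \<le> (K_near + K_far) * (1 + s)^15"
    using K s by (auto intro!: mult_mono power_increasing)
  then have "K_near * (1 + s)^15 * exp (- (s^2) / 2) / r^3 \<le> (K_near + K_far) * (1 + s)^15 * exp (- (s^2) / 2) / r^3"
    "K_far * (1 + s)^9 * exp (- (s^2) / 2) / r^3 \<le> (K_near + K_far) * (1 + s)^15 * exp (- (s^2) / 2) / r^3"
    using r by (auto intro!: divide_right_mono mult_right_mono)
  then show "\<bar>euler_kernel A r s - exp (- (s^2) / 2) * euler_kernel_expansion A r s\<bar>
      \<le> (K_near + K_far) * (1 + s)^15 * exp (- (s^2) / 2) / r^3"
    using euler_kernel_expansion_near[of A r s] euler_kernel_expansion_far[of A r s] assms r s
    unfolding K_near_def K_far_def by (cases "s \<le> r/2") auto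
qed

section \<open>Gaussian moments and parabolic cylinder functions\<close>

lemma has_integral_Gamma_kernel:
  fixes c :: real
  assumes "c > 0"
  shows "((\<lambda>t. t powr (c - 1) * exp (- t)) has_integral Gamma c) {0<..}"
proof -
  have "((\<lambda>t. t powr (c - 1) / exp t) has_integral Gamma c) {0..}"
    using assms by (rule Gamma_integral_real)
  then have "((\<lambda>t. if t \<in> {0<..} then t powr (c - 1) / exp t else 0) has_integral Gamma c) {0..}"
    by (rule has_integral_spike[of "{0}", rotated 2]) auto
  then show ?thesis
    by (subst (asm) has_integral_restrict) (auto simp: exp_minus divide_inverse)
qed

definition gauss_integrand :: "real \<Rightarrow> complex \<Rightarrow> real \<Rightarrow> complex" where
  "gauss_integrand c \<zeta> s = exp (\<zeta> * s - of_real (s^2/2)) * of_real (s powr (c - 1))"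

lemma norm_gauss_integrand_le:
  fixes c M s :: real and \<zeta> :: complex
  assumes "norm \<zeta> \<le> M" "s > 0"
  shows "norm (gauss_integrand c \<zeta> s) \<le> s powr (c - 1) * exp (M * s - s^2/2)"
proof -
  have "norm (gauss_integrand c \<zeta> s) = exp (Re \<zeta> * s - s^2/2) * s powr (c - 1)"
    using assms(2) by (simp add: gauss_integrand_def norm_mult)
  also have "\<dots> \<le> exp (M * s - s^2/2) * s powr (c - 1)"
    using complex_Re_le_cmod[of \<zeta>] assms by (intro mult_right_mono) (auto intro: mult_right_mono)
  finally show ?thesis
    by (simp add: mult.commute)
qed

lemma gauss_integrand_integrable:
  fixes c :: real and \<zeta> :: complex
  assumes "c > 0"
  shows "gauss_integrand c \<zeta> integrable_on {0<..}"
proof (rule measurable_bounded_by_integrable_imp_integrable)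
  show "gauss_integrand c \<zeta> \<in> borel_measurable (lebesgue_on {0<..})"
    unfolding gauss_integrand_def
    by (intro continuous_imp_measurable_on_sets_lebesgue continuous_intros) auto
  show "(\<lambda>s. exp (1 + (norm \<zeta> + 2)^2/2) * (s powr (c - 1) * exp (- s))) integrable_on {0<..}"
    using has_integral_mult_right[OF has_integral_Gamma_kernel[OF assms]] by blast
  fix s :: real assume "s \<in> {0<..}"
  then have "norm (gauss_integrand c \<zeta> s) \<le> s powr (c - 1) * exp (norm \<zeta> * s - s^2/2)"
    by (intro norm_gauss_integrand_le) auto
  also have "\<dots> \<le> s powr (c - 1) * (exp (1 + (norm \<zeta> + 2)^2/2) * exp (- s))"
    using one_plus_power_mult_gauss_le[of s 0 "norm \<zeta>"] \<open>s \<in> {0<..}\<close>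
    by (intro mult_left_mono) auto
  finally show "norm (gauss_integrand c \<zeta> s) \<le> exp (1 + (norm \<zeta> + 2)^2/2) * (s powr (c - 1) * exp (- s))"
    by (simp add: mult_ac)
qed auto

lemma has_integral_gauss_integrand:
  fixes c :: real and \<zeta> :: complex
  assumes "c > 0"
  shows "(gauss_integrand c \<zeta> has_integral Gamma c * exp (\<zeta>^2/4) * pcf_D (- c) (- \<zeta>)) {0<..}"
proof -
  have "pcf_D (- c) (- \<zeta>) = exp (- (\<zeta>^2) / 4) / Gamma c * integral {0<..} (gauss_integrand c \<zeta>)"
    by (simp add: pcf_D_def gauss_integrand_def[abs_def])
  moreover have "Gamma c \<noteq> 0"
    using Gamma_real_pos[OF assms] by simp
  ultimately have "Gamma c * exp (\<zeta>^2/4) * pcf_D (- c) (- \<zeta>) = integral {0<..} (gauss_integrand c \<zeta>)"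
    by (simp add: exp_minus field_simps)
  then show ?thesis
    using gauss_integrand_integrable[OF assms] by (simp add: has_integral_integrable_integral)
qed

lemma gauss_integrand_add_nat:
  fixes c s :: real and \<zeta> :: complex
  assumes "s > 0"
  shows "gauss_integrand (c + real j) \<zeta> s = exp (\<zeta> * s) * of_real (s powr (c - 1) * (exp (- (s^2) / 2) * s^j))"
proof -
  have "exp (\<zeta> * s - of_real (s^2/2)) = exp (\<zeta> * s + of_real (- (s^2) / 2))"
    by simp
  also have "\<dots> = exp (\<zeta> * s) * of_real (exp (- (s^2) / 2))"
    by (simp only: exp_add exp_of_real)
  finally have "exp (\<zeta> * s - of_real (s^2/2)) = exp (\<zeta> * s) * of_real (exp (- (s^2) / 2))" .
  moreover have "s powr (c + real j - 1) = s powr (c - 1) * s^j"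
    using assms by (simp add: powr_add[symmetric] powr_realpow[symmetric] algebra_simps)
  ultimately show ?thesis
    by (simp add: gauss_integrand_def mult_ac)
qed

lemma Gamma_add_nat_eq_pochhammer:
  fixes a :: real
  assumes "a > 0"
  shows "Gamma (a + real n) = pochhammer a n * Gamma a"
proof -
  have "a \<notin> \<int>\<^sub>\<le>\<^sub>0" "Gamma a > 0"
    using assms by (auto elim!: nonpos_Ints_cases intro: Gamma_real_pos)
  then show ?thesis
    by (simp add: pochhammer_Gamma)
qed

lemma Gamma_mult_A1_eq:
  fixes a :: real
  assumes "a > 0"
  shows "Gamma a * A1 a \<zeta> = (a + 1) * Gamma (a + 1) * pcf_D (- a - 1) (- \<zeta>)
           - Gamma (a + 3) / 3 * pcf_D (- a - 3) (- \<zeta>)"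
proof -
  have "(a + 1) * Gamma (a + 1) = Gamma a * (a * (a + 1))"
    "Gamma (a + 3) / 3 = Gamma a * (a * (a + 1) * (a + 2) / 3)"
    using Gamma_add_nat_eq_pochhammer[OF assms, of 1] Gamma_add_nat_eq_pochhammer[OF assms, of 3]
    by (simp_all add: eval_nat_numeral pochhammer_Suc algebra_simps)
  then show ?thesis
    unfolding A1_def by (simp only: of_real_mult right_diff_distrib mult.assoc)
qed

lemma Gamma_mult_A2_eq:
  fixes a :: real
  assumes "a > 0"
  shows "Gamma a * A2 a \<zeta> = (a + 1) * (a + 2) / 2 * Gamma (a + 2) * pcf_D (- a - 2) (- \<zeta>)
           - (1/4 + (a + 1) / 3) * Gamma (a + 4) * pcf_D (- a - 4) (- \<zeta>)
           + Gamma (a + 6) / 18 * pcf_D (- a - 6) (- \<zeta>)"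
proof -
  have "Gamma a > 0"
    using assms by (rule Gamma_real_pos)
  then have k: "(1/4 + (a + 1) / 3) * Gamma (a + 4) = Gamma a * (Gamma (a + 4) / Gamma a * (1/4 + (a + 1) / 3))"
    "Gamma (a + 6) / 18 = Gamma a * (Gamma (a + 6) / (18 * Gamma a))"
    by simp_all
  have k2: "(a + 1) * (a + 2) / 2 * Gamma (a + 2) = Gamma a * (a * (a + 1)^2 * (a + 2) / 2)"
    using Gamma_add_nat_eq_pochhammer[OF assms, of 2]
    by (simp add: eval_nat_numeral pochhammer_Suc power2_eq_square algebra_simps)
  show ?thesis
    unfolding A2_def k k2 of_real_mult by (simp add: algebra_simps)
qed

lemma euler_kernel_expansion_eq:
  fixes A b s :: real
  assumes "b > 0"
  shows "euler_kernel_expansion A (sqrt b) s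
           = 1 + (A * s - s^3/3) / sqrt b + (A * (A + 1) / 2 * s^2 - (1/4 + A/3) * s^4 + s^6/18) / b"
  using assms by (simp add: euler_kernel_expansion_def power2_eq_square field_simps eval_nat_numeral)

text \<open>Integrating \<open>euler_kernel_expansion (a + 1) (sqrt b)\<close> against a measure with moments
  \<open>m j\<close> gives this combination, by \<open>euler_kernel_expansion_eq\<close>.\<close>
definition kernel_expansion_moments :: "(nat \<Rightarrow> complex) \<Rightarrow> real \<Rightarrow> real \<Rightarrow> complex" where
  "kernel_expansion_moments m a b = m 0 + (of_real (a + 1) * m 1 - m 3 / 3) / of_real (sqrt b)
     + (of_real ((a + 1) * (a + 2) / 2) * m 2 - of_real (1/4 + (a + 1) / 3) * m 4 + m 6 / 18) / of_real b"

lemma has_integral_kernel_expansion_moments: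
  assumes "\<And>j. (f j has_integral m j) S"
  shows "((\<lambda>s. kernel_expansion_moments (\<lambda>j. f j s) a b) has_integral kernel_expansion_moments m a b) S"
  unfolding kernel_expansion_moments_def
  by (intro has_integral_add has_integral_diff has_integral_mult_right has_integral_divide assms)

lemma kernel_expansion_moments_gauss_integrand:
  fixes a b s :: real and \<zeta> :: complex
  assumes "b > 0" "s > 0"
  shows "kernel_expansion_moments (\<lambda>j. gauss_integrand (a + j) \<zeta> s) a b
           = exp (\<zeta> * s) * of_real (s powr (a - 1) * (exp (- (s^2) / 2) * euler_kernel_expansion (a + 1) (sqrt b) s))"
proof -
  define W where "W = exp (\<zeta> * s) * of_real (s powr (a - 1) * exp (- (s^2) / 2))"
  have G: "gauss_integrand (a + real j) \<zeta> s = W * of_real s ^ j" for j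
    unfolding W_def using gauss_integrand_add_nat[of s a j \<zeta>] assms(2) by (simp add: mult_ac)
  have expansion: "euler_kernel_expansion (a + 1) (sqrt b) s = 1 + ((a + 1) * s - s^3/3) / sqrt b
      + ((a + 1) * (a + 2) / 2 * s^2 - (1/4 + (a + 1) / 3) * s^4 + s^6/18) / b"
    using euler_kernel_expansion_eq[of b "a + 1" s] assms(1) by (simp add: algebra_simps)
  have "exp (\<zeta> * s) * of_real (s powr (a - 1) * (exp (- (s^2) / 2) * euler_kernel_expansion (a + 1) (sqrt b) s))
      = W * of_real (euler_kernel_expansion (a + 1) (sqrt b) s)"
    by (simp add: W_def)
  also have "\<dots> = kernel_expansion_moments (\<lambda>j. gauss_integrand (a + j) \<zeta> s) a b"
    unfolding expansion kernel_expansion_moments_def G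
    by (simp add: algebra_simps add_divide_distrib diff_divide_distrib)
  finally show ?thesis
    by (rule sym)
qed

lemma kernel_expansion_moments_pcf_D:
  fixes a b :: real and \<zeta> :: complex
  assumes "a > 0"
  shows "kernel_expansion_moments (\<lambda>j. Gamma (a + j) * exp (\<zeta>^2/4) * pcf_D (- a - j) (- \<zeta>)) a b
           = Gamma a * exp (\<zeta>^2/4) * (pcf_D (- a) (- \<zeta>) + A1 a \<zeta> / sqrt b + A2 a \<zeta> / b)"
proof -
  have "Gamma a * exp (\<zeta>^2/4) * (pcf_D (- a) (- \<zeta>) + A1 a \<zeta> / sqrt b + A2 a \<zeta> / b)
      = exp (\<zeta>^2/4) * (Gamma a * pcf_D (- a) (- \<zeta>)) + exp (\<zeta>^2/4) * (Gamma a * A1 a \<zeta>) / sqrt b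
        + exp (\<zeta>^2/4) * (Gamma a * A2 a \<zeta>) / b"
    by (simp add: algebra_simps add_divide_distrib)
  also have "\<dots> = kernel_expansion_moments (\<lambda>j. Gamma (a + j) * exp (\<zeta>^2/4) * pcf_D (- a - j) (- \<zeta>)) a b"
    unfolding Gamma_mult_A1_eq[OF assms] Gamma_mult_A2_eq[OF assms] kernel_expansion_moments_def
    by (simp add: algebra_simps add_divide_distrib diff_divide_distrib)
  finally show ?thesis
    by (rule sym)
qed

lemma has_integral_euler_kernel_expansion:
  fixes a b :: real and \<zeta> :: complex
  assumes "a > 0" "b > 0"
  shows "((\<lambda>s. exp (\<zeta> * s) * of_real (s powr (a - 1) * (exp (- (s^2) / 2) * euler_kernel_expansion (a + 1) (sqrt b) s)))
           has_integral Gamma a * exp (\<zeta>^2/4) * (pcf_D (- a) (- \<zeta>) + A1 a \<zeta> / sqrt b + A2 a \<zeta> / b)) {0<..}"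
proof -
  have "(gauss_integrand (a + j) \<zeta> has_integral Gamma (a + j) * exp (\<zeta>^2/4) * pcf_D (- a - j) (- \<zeta>)) {0<..}"
    for j :: nat
    using has_integral_gauss_integrand[of "a + real j" \<zeta>] assms by simp
  from has_integral_kernel_expansion_moments[of "\<lambda>j. gauss_integrand (a + j) \<zeta>", OF this, of a b]
  show ?thesis
    unfolding kernel_expansion_moments_pcf_D[OF assms(1)]
    by (rule has_integral_eq[rotated]) (simp add: kernel_expansion_moments_gauss_integrand assms(2))
qed

lemma norm_exp_mult_gauss_dominated_le:
  fixes c h K M r s :: real and \<zeta> :: complex
  assumes "\<bar>h\<bar> \<le> K * (1 + s)^n * exp (- (s^2) / 2) / r^3"
    and "K \<ge> 0" "norm \<zeta> \<le> M" "s > 0" "r > 0"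
  shows "norm (exp (\<zeta> * s) * of_real (s powr (c - 1) * h))
           \<le> K * fact n * exp (1 + (M + 2)^2/2) / r^3 * (s powr (c - 1) * exp (- s))"
proof -
  have "norm (exp (\<zeta> * s) * of_real (s powr (c - 1) * h)) = exp (Re \<zeta> * s) * (s powr (c - 1) * \<bar>h\<bar>)"
    using assms(3) by (simp add: norm_mult abs_mult)
  also have "\<dots> \<le> exp (M * s) * (s powr (c - 1) * (K * (1 + s)^n * exp (- (s^2) / 2) / r^3))"
    using complex_Re_le_cmod[of \<zeta>] assms
    by (intro mult_mono mult_left_mono mult_right_mono) auto
  also have "\<dots> = K / r^3 * s powr (c - 1) * ((1 + s)^n * exp (M * s - s^2/2))"
  proof -
    have "exp (M * s - s^2/2) = exp (M * s) * exp (- (s^2) / 2)"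
      by (simp flip: exp_add)
    then show ?thesis
      by (simp add: mult_ac)
  qed
  also have "\<dots> \<le> K / r^3 * s powr (c - 1) * (fact n * exp (1 + (M + 2)^2/2) * exp (- s))"
    using one_plus_power_mult_gauss_le[of s n M] assms
    by (intro mult_left_mono) auto
  finally show ?thesis
    by (simp add: mult_ac)
qed

lemma norm_integral_exp_mult_gauss_dominated_le:
  fixes c K M r :: real and h :: "real \<Rightarrow> real" and \<zeta> :: complex
  assumes integrable: "(\<lambda>s. exp (\<zeta> * s) * of_real (s powr (c - 1) * h s)) integrable_on {0<..}"
    and bound: "\<And>s. s > 0 \<Longrightarrow> \<bar>h s\<bar> \<le> K * (1 + s)^n * exp (- (s^2) / 2) / r^3"
    and "c > 0" "K \<ge> 0" "norm \<zeta> \<le> M" "r > 0"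
  shows "norm (integral {0<..} (\<lambda>s. exp (\<zeta> * s) * of_real (s powr (c - 1) * h s)))
           \<le> K * fact n * exp (1 + (M + 2)^2/2) / r^3 * Gamma c"
proof -
  define L where "L = K * fact n * exp (1 + (M + 2)^2/2) / r^3"
  have dominant: "((\<lambda>s. L * (s powr (c - 1) * exp (- s))) has_integral L * Gamma c) {0<..}"
    using has_integral_Gamma_kernel[OF assms(3)] by (rule has_integral_mult_right)
  have "norm (integral {0<..} (\<lambda>s. exp (\<zeta> * s) * of_real (s powr (c - 1) * h s)))
      \<le> integral {0<..} (\<lambda>s. L * (s powr (c - 1) * exp (- s)))"
  proof (rule integral_norm_bound_integral[OF integrable])
    show "(\<lambda>s. L * (s powr (c - 1) * exp (- s))) integrable_on {0<..}"
      using dominant by blast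
    fix s :: real assume "s \<in> {0<..}"
    then show "norm (exp (\<zeta> * s) * of_real (s powr (c - 1) * h s)) \<le> L * (s powr (c - 1) * exp (- s))"
      unfolding L_def using bound assms(4-6) by (intro norm_exp_mult_gauss_dominated_le) auto
  qed
  also have "\<dots> = L * Gamma c"
    by (rule integral_unique[OF dominant])
  finally show ?thesis
    by (simp only: L_def)
qed

section \<open>The remainder\<close>

lemma hyp1F1_minus_expansion_eq:
  fixes a b :: real and \<zeta> :: complex
  assumes "a > 0" "b > a"
  defines "h \<equiv> \<lambda>s. euler_kernel (a + 1) (sqrt b) s - exp (- (s^2) / 2) * euler_kernel_expansion (a + 1) (sqrt b) s"
  shows "(\<lambda>s. exp (\<zeta> * s) * of_real (s powr (a - 1) * h s)) integrable_on {0<..}"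
    and "hyp1F1 a b (b * (1 + b powr (-1/2) * \<zeta>))
           - of_real (Gamma b / Gamma (b - a) * b powr (- a / 2)) * exp (\<zeta>^2 / 4)
             * (pcf_D (- a) (- \<zeta>) + A1 a \<zeta> / sqrt b + A2 a \<zeta> / b)
         = of_real (Gamma b / Gamma (b - a) * b powr (- a / 2) / Gamma a)
             * integral {0<..} (\<lambda>s. exp (\<zeta> * s) * of_real (s powr (a - 1) * h s))"
proof -
  define F where "F s = exp (\<zeta> * s) * of_real (s powr (a - 1) * euler_kernel (a + 1) (sqrt b) s)" for s
  define E where "E s = exp (\<zeta> * s) * of_real (s powr (a - 1) *
      (exp (- (s^2) / 2) * euler_kernel_expansion (a + 1) (sqrt b) s))" for s
  have "b > 0" "Gamma a > 0"
    using assms(1,2) by (auto intro!: Gamma_real_pos)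
  note scaling = hyp1F1_parabolic_scaling[OF assms(1,2), of \<zeta>, folded F_def]
  note expansion = has_integral_euler_kernel_expansion[OF assms(1) \<open>b > 0\<close>, of \<zeta>, folded E_def]
  have F_minus_E: "(\<lambda>s. F s - E s) = (\<lambda>s. exp (\<zeta> * s) * of_real (s powr (a - 1) * h s))"
    by (simp add: fun_eq_iff F_def E_def h_def algebra_simps)
  show "(\<lambda>s. exp (\<zeta> * s) * of_real (s powr (a - 1) * h s)) integrable_on {0<..}"
    unfolding F_minus_E[symmetric] using scaling(1) expansion by (intro integrable_diff) auto
  have "complex_of_real (Gamma a) \<noteq> 0"
    using \<open>Gamma a > 0\<close> by simp
  then have P_eq: "of_real Q * exp (\<zeta>^2 / 4) * (pcf_D (- a) (- \<zeta>) + A1 a \<zeta> / sqrt b + A2 a \<zeta> / b)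
      = of_real (Q / Gamma a) * integral {0<..} E" for Q
    unfolding integral_unique[OF expansion] by (simp add: field_simps)
  show "hyp1F1 a b (b * (1 + b powr (-1/2) * \<zeta>))
           - of_real (Gamma b / Gamma (b - a) * b powr (- a / 2)) * exp (\<zeta>^2 / 4)
             * (pcf_D (- a) (- \<zeta>) + A1 a \<zeta> / sqrt b + A2 a \<zeta> / b)
         = of_real (Gamma b / Gamma (b - a) * b powr (- a / 2) / Gamma a)
             * integral {0<..} (\<lambda>s. exp (\<zeta> * s) * of_real (s powr (a - 1) * h s))"
    unfolding scaling(2) P_eq F_minus_E[symmetric] integral_diff[OF scaling(1) has_integral_integrable[OF expansion]]
    by (rule right_diff_distrib[symmetric])
qed

lemma hyp1F1_expansion_remainder_le:
  fixes a b K M :: real and \<zeta> :: complex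
  assumes "a > 0" "b \<ge> a + 1" "K \<ge> 0" "norm \<zeta> \<le> M"
    and kernel: "\<And>s. s > 0 \<Longrightarrow>
      \<bar>euler_kernel (a + 1) (sqrt b) s - exp (- (s^2) / 2) * euler_kernel_expansion (a + 1) (sqrt b) s\<bar>
        \<le> K * (1 + s)^15 * exp (- (s^2) / 2) / sqrt b ^ 3"
  defines "P \<equiv> complex_of_real (Gamma b / Gamma (b - a) * b powr (- a / 2)) * exp (\<zeta>^2 / 4)"
  shows "norm (hyp1F1 a b (b * (1 + b powr (-1/2) * \<zeta>))
                 - P * (pcf_D (- a) (- \<zeta>) + A1 a \<zeta> / sqrt b + A2 a \<zeta> / b))
           \<le> exp (M^2/4) * K * fact 15 * exp (1 + (M + 2)^2/2) * b powr (-3/2) * norm P"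
proof -
  define Q where "Q = Gamma b / Gamma (b - a) * b powr (- a / 2)"
  define L where "L = K * fact 15 * exp (1 + (M + 2)^2/2)"
  have ab: "b > a" "b > 0"
    using assms(1,2) by auto
  have Q: "Q > 0" "Gamma a > 0"
    using ab assms(1) by (auto simp: Q_def intro!: Gamma_real_pos)
  note remainder = hyp1F1_minus_expansion_eq[OF assms(1) ab(1), of \<zeta>, folded Q_def P_def]
  have "norm (integral {0<..} (\<lambda>s. exp (\<zeta> * s) * of_real (s powr (a - 1) *
          (euler_kernel (a + 1) (sqrt b) s - exp (- (s^2) / 2) * euler_kernel_expansion (a + 1) (sqrt b) s))))
      \<le> L / sqrt b ^ 3 * Gamma a"
    unfolding L_def using kernel assms(1,3,4) ab(2)
    by (intro norm_integral_exp_mult_gauss_dominated_le[OF remainder(1)]) auto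
  then have "norm (hyp1F1 a b (b * (1 + b powr (-1/2) * \<zeta>)) - P * (pcf_D (- a) (- \<zeta>) + A1 a \<zeta> / sqrt b + A2 a \<zeta> / b))
      \<le> Q / Gamma a * (L / sqrt b ^ 3 * Gamma a)"
    unfolding remainder(2) norm_mult norm_of_real abs_of_pos[OF divide_pos_pos[OF Q]]
    by (rule mult_left_mono) (use Q in auto)
  also have "\<dots> = L * (1 / sqrt b ^ 3) * Q"
    using Q by simp
  also have "\<dots> \<le> L * b powr (-3/2) * (exp (M^2/4) * norm P)"
    unfolding one_over_sqrt_cube_eq_powr[OF ab(2)] P_def Q_def[symmetric]
    using le_exp_quarter_square_mult_norm[OF assms(4)] Q assms(3)
    by (intro mult_left_mono) (auto simp: L_def)
  finally show ?thesis
    by (simp add: L_def mult_ac)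
qed

theorem theoremB6:
  fixes a :: real
  assumes "a > 0"
  shows "\<forall>K :: complex set. compact K \<longrightarrow>
    (\<exists>C B. \<forall>b::real. b \<ge> B \<longrightarrow> (\<forall>\<zeta>\<in>K.
       (let P = complex_of_real (Gamma b / Gamma (b - a) * b powr (- a / 2)) * exp (\<zeta>^2 / 4)
        in norm (hyp1F1 a b (complex_of_real b * (1 + complex_of_real (b powr (-1/2)) * \<zeta>))
                 - P * (pcf_D (- a) (- \<zeta>) + A1 a \<zeta> / complex_of_real (sqrt b)
                        + A2 a \<zeta> / complex_of_real b))
           \<le> C * b powr (-3/2) * norm P)))"
proof (intro allI impI)
  fix K :: "complex set"
  assume "compact K"
  then obtain M where M: "\<And>\<zeta>. \<zeta> \<in> K \<Longrightarrow> norm \<zeta> \<le> M"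
    using compact_imp_bounded bounded_iff by metis
  obtain L where "L \<ge> 0" and kernel: "\<And>r s. r \<ge> 1 \<Longrightarrow> r^2 \<ge> a + 1 \<Longrightarrow> s > 0 \<Longrightarrow>
      \<bar>euler_kernel (a + 1) r s - exp (- (s^2) / 2) * euler_kernel_expansion (a + 1) r s\<bar>
        \<le> L * (1 + s)^15 * exp (- (s^2) / 2) / r^3"
    using euler_kernel_expansion_error[of "a + 1"] assms by auto
  have "sqrt b \<ge> 1" "(sqrt b)^2 \<ge> a + 1" if "b \<ge> a + 1" for b
    using that assms by (auto simp: real_le_rsqrt)
  then show "\<exists>C B. \<forall>b::real. b \<ge> B \<longrightarrow> (\<forall>\<zeta>\<in>K.
       (let P = complex_of_real (Gamma b / Gamma (b - a) * b powr (- a / 2)) * exp (\<zeta>^2 / 4)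
        in norm (hyp1F1 a b (complex_of_real b * (1 + complex_of_real (b powr (-1/2)) * \<zeta>))
                 - P * (pcf_D (- a) (- \<zeta>) + A1 a \<zeta> / complex_of_real (sqrt b)
                        + A2 a \<zeta> / complex_of_real b))
           \<le> C * b powr (-3/2) * norm P))"
    using hyp1F1_expansion_remainder_le[OF assms _ \<open>L \<ge> 0\<close> M kernel] unfolding Let_def by blast
qed

end
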